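(* For $\tau>0$ and $p\in M$ let $\zeta_\tau(p)=\frac{e^{-\varphi(p)^2/(2\tau^2)}}{\sqrt{2\pi}}G\!\left(\frac{d_p\varphi}{\tau}\right)\subset T_p^*M$. Then: (1) for all $p\in M$, $\zeta_\tau(p)\to\frac{1}{2\pi}B_M(p)$ as $\tau\to\infty$, where $B_M(p)\subset T_p^*M$ is the unit ball; (2) for all $p\in M\setminus Z_0$, $\zeta_\tau(p)\to\{0\}$ as $\tau\to0$; (3) for $p\in Z_0$, letting $\pi_p$ be the orthogonal projection of $T_p^*M$ onto the orthogonal complement of $d_p\varphi$ (identified with $T_p^*Z_0$), we have for all $\tau>0$: $\pi_p(\zeta_\tau(p))=\frac{1}{2\pi}B_{Z_0}(p)$, the unit ball of $T_p^*Z_0$ for the metric induced from $M$. Convergence is in the Hausdorff distance.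
   Context: $M$ is a smooth Riemannian manifold of dimension $m$; $T_p^*M$ carries the dual Euclidean structure. $\varphi\in C^\infty(M)$ is fixed and $Z_0:=\varphi^{-1}(0)$. For an integrable random vector $Y$ in a Euclidean space $E$, the Vitale zonoid $\mathbb{E}\underline{Y}$ is the convex body with support function $u\mapsto\frac12\mathbb{E}|\langle u,Y\rangle|$; for $c\in E$, $G(c):=\mathbb{E}\underline{c+\xi}$ with $\xi$ a standard Gaussian vector in $E$. (In the paper, $\zeta_\tau$ is the zonoid section of the random field $\varphi+\tau g$, $g$ a standard GRF inducing the metric.) *)

theory Defs
  imports "HOL-Analysis.Analysis"
begin

definition std_gauss_density :: "'a::euclidean_space \<Rightarrow> real" where
  "std_gauss_density x = (2 * pi) powr (- real DIM('a) / 2) * exp (- (norm x)\<^sup>2 / 2)"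

definition gauss_expect :: "('a::euclidean_space \<Rightarrow> real) \<Rightarrow> real" where
  "gauss_expect f = (LINT x|lborel. f x * std_gauss_density x)"

definition body_of_support :: "('a::euclidean_space \<Rightarrow> real) \<Rightarrow> 'a set" where
  "body_of_support h = {x. \<forall>u. u \<bullet> x \<le> h u}"

text \<open>G(c) = Vitale zonoid of c + xi, xi standard Gaussian:
  support function u |-> 1/2 E |<u, c + xi>|.\<close>
definition G_zonoid :: "'a::euclidean_space \<Rightarrow> 'a set" where
  "G_zonoid c = body_of_support (\<lambda>u. gauss_expect (\<lambda>x. \<bar>u \<bullet> (c + x)\<bar>) / 2)"

text \<open>zeta_tau(p), written pointwise with a = phi(p) and v = d_p phi in T_p^*M.\<close>
definition zeta :: "real \<Rightarrow> 'a::euclidean_space \<Rightarrow> real \<Rightarrow> 'a set" where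
  "zeta a v \<tau> = (\<lambda>x. (exp (- a\<^sup>2 / (2 * \<tau>\<^sup>2)) / sqrt (2 * pi)) *\<^sub>R x) ` G_zonoid ((1 / \<tau>) *\<^sub>R v)"

text \<open>Hausdorff distance between (nonempty bounded) sets.\<close>
definition hausdorff_dist :: "'a::metric_space set \<Rightarrow> 'a set \<Rightarrow> real" where
  "hausdorff_dist S T = max (SUP x\<in>S. infdist x T) (SUP y\<in>T. infdist y S)"

definition proj_perp :: "'a::euclidean_space \<Rightarrow> 'a \<Rightarrow> 'a" where
  "proj_perp v x = x - ((x \<bullet> v) / (v \<bullet> v)) *\<^sub>R v"

end

theory Submission
  imports Defs "HOL-Probability.Probability" "HOL-Real_Asymp.Real_Asymp"
begin

text \<open>The support function of \<open>G(c)\<close> is \<open>h\<^sub>c(u) = E|u\<bullet>c + u\<bullet>\<xi>|/2\<close>, and \<open>u\<bullet>\<xi>\<close> is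
  centred normal with standard deviation \<open>|u|\<close>. Comparing with the mean of the folded normal
  distribution gives \<open>|u|/\<surd>(2\<pi>) \<le> h\<^sub>c(u) \<le> |u|/\<surd>(2\<pi>) + |u\<bullet>c|/2\<close>, where the lower bound comes
  from the symmetry of the normal law. Hence \<open>G(c)\<close> lies between the centred balls of radii
  \<open>1/\<surd>(2\<pi>)\<close> and \<open>1/\<surd>(2\<pi>) + |c|/2\<close>, and \<open>\<zeta>\<^sub>\<tau>\<close> between balls whose radii both tend to
  \<open>1/(2\<pi>)\<close> as \<open>\<tau> \<rightarrow> \<infinity>\<close>, and to \<open>0\<close> as \<open>\<tau> \<rightarrow> 0\<close> when \<open>a \<noteq> 0\<close>, thanks to the factor
  \<open>exp(-a\<^sup>2/(2\<tau>\<^sup>2))\<close>. For \<open>a = 0\<close> and \<open>c\<close> parallel to \<open>v\<close> the upper bound is sharp on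
  \<open>v\<^sup>\<bottom>\<close>, so projecting \<open>G(c)\<close> onto \<open>v\<^sup>\<bottom>\<close> gives exactly the ball of radius \<open>1/\<surd>(2\<pi>)\<close>
  there.\<close>

section \<open>Gaussian vectors as independent normal coordinates\<close>

abbreviation std_normal :: "real measure" where
  "std_normal \<equiv> density lborel std_normal_density"

lemma prob_space_std_normal: "prob_space std_normal"
  using prob_space_normal_density[of 1 0] by simp

lemma PiM_std_normal_eq_density:
  assumes I: "finite I"
  shows "PiM I (\<lambda>_. std_normal)
       = density (PiM I (\<lambda>_. lborel)) (\<lambda>\<omega>. \<Prod>i\<in>I. ennreal (std_normal_density (\<omega> i)))"
proof -
  interpret N: product_sigma_finite "\<lambda>_. std_normal"
    unfolding product_sigma_finite_def
    using prob_space_std_normal prob_space_imp_sigma_finite by blast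
  interpret L: product_sigma_finite "\<lambda>_. lborel :: real measure"
    by (simp add: product_sigma_finite_def lborel.sigma_finite_measure_axioms)
  show ?thesis
  proof (rule N.PiM_eqI[OF I, symmetric])
    show "sets (density (PiM I (\<lambda>_. lborel)) (\<lambda>\<omega>. \<Prod>i\<in>I. ennreal (std_normal_density (\<omega> i))))
        = sets (PiM I (\<lambda>_. std_normal))"
      by (simp only: sets_density) (intro sets_PiM_cong; simp)
  next
    fix A assume A: "\<And>i. i \<in> I \<Longrightarrow> A i \<in> sets std_normal"
    have "emeasure (density (PiM I (\<lambda>_. lborel)) (\<lambda>\<omega>. \<Prod>i\<in>I. ennreal (std_normal_density (\<omega> i)))) (PiE I A)
        = (\<integral>\<^sup>+ \<omega>. (\<Prod>i\<in>I. ennreal (std_normal_density (\<omega> i)) * indicator (A i) (\<omega> i)) \<partial>PiM I (\<lambda>_. lborel))"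
      using A I by (subst emeasure_density)
        (auto intro!: sets_PiM_I_finite nn_integral_cong
              simp: space_PiM indicator_def prod.distrib PiE_iff)
    also have "\<dots> = (\<Prod>i\<in>I. \<integral>\<^sup>+ x. ennreal (std_normal_density x) * indicator (A i) x \<partial>lborel)"
      using A L.product_nn_integral_prod[OF I,
          of "\<lambda>i x. ennreal (std_normal_density x) * indicator (A i) x"] by simp
    also have "\<dots> = (\<Prod>i\<in>I. emeasure std_normal (A i))"
      using A by (intro prod.cong refl) (simp add: emeasure_density)
    finally show "emeasure (density (PiM I (\<lambda>_. lborel)) (\<lambda>\<omega>. \<Prod>i\<in>I. ennreal (std_normal_density (\<omega> i)))) (PiE I A)
        = (\<Prod>i\<in>I. emeasure std_normal (A i))" .
  qed
qed

lemma std_gauss_density_eq_prod: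
  "std_gauss_density (x::'a::euclidean_space) = (\<Prod>b\<in>Basis. std_normal_density (x \<bullet> b))"
proof -
  have "(1 / sqrt (2 * pi)) ^ DIM('a) = ((2 * pi) powr (- (1 / 2))) ^ DIM('a)"
    by (simp add: powr_minus_divide powr_half_sqrt)
  also have "\<dots> = (2 * pi) powr (- real DIM('a) / 2)"
    by (subst powr_power) simp_all
  finally have "(2 * pi) powr (- real DIM('a) / 2) = (1 / sqrt (2 * pi)) ^ DIM('a)" ..
  moreover have "(norm x)\<^sup>2 = (\<Sum>b\<in>Basis. (x \<bullet> b)\<^sup>2)"
    unfolding power2_norm_eq_inner by (subst euclidean_inner) (simp add: power2_eq_square)
  then have "exp (- (norm x)\<^sup>2 / 2) = (\<Prod>b\<in>Basis. exp (- (x \<bullet> b)\<^sup>2 / 2))"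
    by (simp add: exp_sum[symmetric] sum_divide_distrib[symmetric] sum_negf)
  ultimately show ?thesis
    unfolding std_gauss_density_def std_normal_density_def prod.distrib by simp
qed

lemma borel_measurable_std_gauss_density[measurable]: "std_gauss_density \<in> borel_measurable borel"
  unfolding std_gauss_density_def by measurable

lemma density_std_gauss_eq_distr_PiM:
  "density lborel (\<lambda>x::'a::euclidean_space. ennreal (std_gauss_density x))
     = distr (PiM Basis (\<lambda>_. std_normal)) borel (\<lambda>\<omega>. \<Sum>b\<in>Basis. \<omega> b *\<^sub>R b)"
proof -
  have "density lborel (\<lambda>x::'a. ennreal (std_gauss_density x))
      = distr (density (PiM Basis (\<lambda>_. lborel))
               (\<lambda>\<omega>. ennreal (std_gauss_density (\<Sum>b\<in>Basis. \<omega> b *\<^sub>R b)))) borel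
          (\<lambda>\<omega>. \<Sum>b\<in>Basis. \<omega> b *\<^sub>R b)"
    unfolding lborel_eq[where 'a='a] by (rule density_distr) measurable
  also have "density (PiM Basis (\<lambda>_. lborel))
               (\<lambda>\<omega>. ennreal (std_gauss_density (\<Sum>b\<in>Basis. \<omega> b *\<^sub>R (b::'a))))
      = PiM Basis (\<lambda>_. std_normal)"
    unfolding PiM_std_normal_eq_density[OF finite_Basis] std_gauss_density_eq_prod
    by (intro density_cong)
       (auto simp: inner_sum_left inner_Basis if_distrib prod_ennreal cong: if_cong)
  finally show ?thesis .
qed

lemma gauss_expect_eq_PiM_integral:
  fixes f :: "'a::euclidean_space \<Rightarrow> real"
  assumes [measurable]: "f \<in> borel_measurable borel"
  shows "gauss_expect f = (\<integral>\<omega>. f (\<Sum>b\<in>Basis. \<omega> b *\<^sub>R b) \<partial>PiM Basis (\<lambda>_. std_normal))"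
proof -
  have "gauss_expect f = integral\<^sup>L (density lborel (\<lambda>x. ennreal (std_gauss_density x))) f"
    unfolding gauss_expect_def
    by (subst integral_density) (auto simp: std_gauss_density_def mult.commute)
  then show ?thesis
    unfolding density_std_gauss_eq_distr_PiM by (simp add: integral_distr)
qed

lemma indep_vars_PiM_components:
  assumes "finite I" "I \<noteq> {}" and M: "\<And>i. i \<in> I \<Longrightarrow> prob_space (M i)"
  shows "prob_space.indep_vars (PiM I M) M (\<lambda>i \<omega>. \<omega> i) I"
proof -
  interpret prob_space "PiM I M"
    using M by (rule prob_space_PiM)
  have "distr (PiM I M) (PiM I M) (\<lambda>\<omega>. \<lambda>i\<in>I. \<omega> i) = distr (PiM I M) (PiM I M) (\<lambda>\<omega>. \<omega>)"
    by (rule distr_cong) (auto simp: space_PiM PiE_def extensional_restrict)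
  also have "\<dots> = PiM I (\<lambda>i. distr (PiM I M) (M i) (\<lambda>\<omega>. \<omega> i))"
    using M by (simp add: distr_PiM_component cong: PiM_cong)
  finally show ?thesis
    using assms(2) by (subst indep_vars_iff_distr_eq_PiM') auto
qed

lemma distributed_PiM_std_normal_component:
  assumes "i \<in> I"
  shows "distributed (PiM I (\<lambda>_. std_normal)) lborel (\<lambda>\<omega>. \<omega> i) std_normal_density"
proof -
  have "distr (PiM I (\<lambda>_. std_normal)) lborel (\<lambda>\<omega>. \<omega> i)
      = distr (PiM I (\<lambda>_. std_normal)) std_normal (\<lambda>\<omega>. \<omega> i)"
    by (rule distr_cong) auto
  also have "\<dots> = std_normal"
    using prob_space_std_normal assms by (rule distr_PiM_component)
  finally show ?thesis
    using assms unfolding distributed_def by auto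
qed

lemma distributed_inner_std_gauss:
  fixes u :: "'a::euclidean_space"
  assumes "u \<noteq> 0"
  shows "distributed (PiM Basis (\<lambda>_. std_normal)) lborel
           (\<lambda>\<omega>. u \<bullet> (\<Sum>b\<in>Basis. \<omega> b *\<^sub>R b)) (normal_density 0 (norm u))"
proof -
  interpret P: prob_space "PiM Basis (\<lambda>_::'a. std_normal)"
    using prob_space_std_normal by (rule prob_space_PiM)
  \<comment> \<open>\<open>sum_indep_normal\<close> needs positive standard deviations, so drop the coordinates
    with \<open>u \<bullet> b = 0\<close>.\<close>
  define B where "B = {b\<in>Basis. u \<bullet> b \<noteq> 0}"
  have "B \<noteq> {}"
    using assms euclidean_all_zero_iff[of u] by (auto simp: B_def)
  have sum_B: "u \<bullet> (\<Sum>b\<in>Basis. \<omega> b *\<^sub>R b) = (\<Sum>b\<in>B. (u \<bullet> b) * \<omega> b)" for \<omega> :: "'a \<Rightarrow> real"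
    unfolding B_def inner_sum_right
    by (rule sum.mono_neutral_cong_right) auto
  have norm_B: "norm u = sqrt (\<Sum>b\<in>B. \<bar>u \<bullet> b\<bar>\<^sup>2)"
  proof -
    have "(norm u)\<^sup>2 = (\<Sum>b\<in>B. \<bar>u \<bullet> b\<bar>\<^sup>2)"
      unfolding power2_norm_eq_inner euclidean_inner[of u u] power2_abs B_def
      by (rule sum.mono_neutral_cong_right) (auto simp: power2_eq_square)
    then show ?thesis
      by (metis norm_ge_zero real_sqrt_unique)
  qed
  have "P.indep_vars (\<lambda>_. std_normal) (\<lambda>b \<omega>. \<omega> b) B"
    using P.indep_vars_subset[OF indep_vars_PiM_components] prob_space_std_normal
    by (auto simp: B_def)
  then have "P.indep_vars (\<lambda>_. borel) (\<lambda>b \<omega>. (u \<bullet> b) * \<omega> b) B"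
    by (rule P.indep_vars_compose2) simp
  moreover have "distributed (PiM Basis (\<lambda>_. std_normal)) lborel (\<lambda>\<omega>. (u \<bullet> b) * \<omega> b)
      (normal_density 0 \<bar>u \<bullet> b\<bar>)" if "b \<in> B" for b
    using P.normal_density_affine[OF distributed_PiM_std_normal_component[of b Basis],
        where \<alpha>="u \<bullet> b" and \<beta>=0] that
    by (simp add: B_def)
  ultimately have "distributed (PiM Basis (\<lambda>_. std_normal)) lborel (\<lambda>\<omega>. \<Sum>b\<in>B. (u \<bullet> b) * \<omega> b)
      (normal_density (\<Sum>b\<in>B. 0) (sqrt (\<Sum>b\<in>B. \<bar>u \<bullet> b\<bar>\<^sup>2)))"
    using \<open>B \<noteq> {}\<close> by (intro P.sum_indep_normal) (auto simp: B_def)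
  then show ?thesis
    unfolding sum_B norm_B by simp
qed

lemma gauss_expect_abs_inner_eq:
  fixes u c :: "'a::euclidean_space"
  assumes "u \<noteq> 0"
  shows "gauss_expect (\<lambda>x. \<bar>u \<bullet> (c + x)\<bar>)
       = (\<integral>y. normal_density 0 (norm u) y * \<bar>u \<bullet> c + y\<bar> \<partial>lborel)"
  by (subst gauss_expect_eq_PiM_integral)
     (auto simp: inner_add_right
           intro!: distributed_integral[OF distributed_inner_std_gauss[OF assms], symmetric])

section \<open>The folded normal distribution\<close>

lemma integrable_normal_density_abs_shift:
  assumes "0 < \<sigma>"
  shows "integrable lborel (\<lambda>y. normal_density 0 \<sigma> y * \<bar>\<beta> + y\<bar>)"
proof -
  have "integrable lborel (\<lambda>y. \<bar>normal_density 0 \<sigma> y * \<beta> + normal_density 0 \<sigma> y * y\<bar>)"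
    using assms
    by (intro integrable_abs Bochner_Integration.integrable_add integrable_mult_left
        integrable_normal_density integrable_normal_moment_nz_1)
  then show ?thesis
    by (simp add: abs_mult flip: distrib_left)
qed

lemma integral_normal_density_abs:
  assumes "0 < \<sigma>"
  shows "(\<integral>y. normal_density 0 \<sigma> y * \<bar>y\<bar> \<partial>lborel) = \<sigma> * sqrt (2 / pi)"
  using integral_normal_moment_abs_odd[of \<sigma> 0 0] assms by simp

lemma integral_normal_density_abs_shift_le:
  assumes "0 < \<sigma>"
  shows "(\<integral>y. normal_density 0 \<sigma> y * \<bar>\<beta> + y\<bar> \<partial>lborel) \<le> \<bar>\<beta>\<bar> + \<sigma> * sqrt (2 / pi)"
proof -
  have "(\<integral>y. normal_density 0 \<sigma> y * \<bar>\<beta> + y\<bar> \<partial>lborel)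
      \<le> (\<integral>y. \<bar>\<beta>\<bar> * normal_density 0 \<sigma> y + normal_density 0 \<sigma> y * \<bar>0 + y\<bar> \<partial>lborel)"
  proof (rule integral_mono)
    show "normal_density 0 \<sigma> y * \<bar>\<beta> + y\<bar>
        \<le> \<bar>\<beta>\<bar> * normal_density 0 \<sigma> y + normal_density 0 \<sigma> y * \<bar>0 + y\<bar>" for y
      using mult_left_mono[OF abs_triangle_ineq[of \<beta> y] normal_density_nonneg[of 0 \<sigma> y]]
      by (simp add: algebra_simps)
  qed (intro Bochner_Integration.integrable_add integrable_mult_right integrable_normal_density
        integrable_normal_density_abs_shift assms)+
  also have "\<dots> = \<bar>\<beta>\<bar> + \<sigma> * sqrt (2 / pi)"
    using assms integrable_normal_density_abs_shift[OF assms, of 0]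
    by (simp add: integral_normal_density_abs)
  finally show ?thesis .
qed

lemma integral_normal_density_abs_shift_reflect:
  "(\<integral>y. normal_density 0 \<sigma> y * \<bar>y - \<beta>\<bar> \<partial>lborel)
   = (\<integral>y. normal_density 0 \<sigma> y * \<bar>\<beta> + y\<bar> \<partial>lborel)"
  by (subst lborel_integral_real_affine[where c="-1" and t=0])
     (simp_all add: normal_density_def abs_minus_commute)

text \<open>By symmetry of the normal density the shifts by \<open>\<beta>\<close> and \<open>-\<beta>\<close> have the same
  integral, and \<open>|\<beta> + y| + |y - \<beta>| \<ge> 2 |y|\<close>.\<close>
lemma integral_normal_density_abs_shift_ge:
  assumes "0 < \<sigma>"
  shows "\<sigma> * sqrt (2 / pi) \<le> (\<integral>y. normal_density 0 \<sigma> y * \<bar>\<beta> + y\<bar> \<partial>lborel)"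
proof -
  note integrable = integrable_normal_density_abs_shift[OF assms]
  have integrable_minus: "integrable lborel (\<lambda>y. normal_density 0 \<sigma> y * \<bar>y - \<beta>\<bar>)"
    using integrable[of "- \<beta>"] by simp
  have "2 * (\<sigma> * sqrt (2 / pi)) = (\<integral>y. 2 * (normal_density 0 \<sigma> y * \<bar>0 + y\<bar>) \<partial>lborel)"
    using assms by (simp add: integral_normal_density_abs)
  also have "\<dots> \<le> (\<integral>y. normal_density 0 \<sigma> y * \<bar>\<beta> + y\<bar> + normal_density 0 \<sigma> y * \<bar>y - \<beta>\<bar> \<partial>lborel)"
  proof (rule integral_mono)
    show "2 * (normal_density 0 \<sigma> y * \<bar>0 + y\<bar>)
        \<le> normal_density 0 \<sigma> y * \<bar>\<beta> + y\<bar> + normal_density 0 \<sigma> y * \<bar>y - \<beta>\<bar>" for y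
      using mult_left_mono[of "2 * \<bar>y\<bar>" "\<bar>\<beta> + y\<bar> + \<bar>y - \<beta>\<bar>" "normal_density 0 \<sigma> y"]
      by (simp add: algebra_simps)
  qed (intro integrable_mult_right Bochner_Integration.integrable_add integrable integrable_minus)+
  also have "\<dots> = 2 * (\<integral>y. normal_density 0 \<sigma> y * \<bar>\<beta> + y\<bar> \<partial>lborel)"
    using integrable[of \<beta>] integrable_minus
    by (simp add: integral_normal_density_abs_shift_reflect)
  finally show ?thesis by simp
qed

section \<open>The Gaussian zonoid and its projections\<close>

lemma sqrt_2_div_pi: "sqrt (2 / pi) = 2 / sqrt (2 * pi)"
proof -
  have "sqrt (2 / pi) = sqrt 2 / sqrt pi"
    by (simp add: real_sqrt_divide)
  also have "\<dots> = 2 / sqrt (2 * pi)"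
    by (simp add: real_sqrt_mult field_simps)
  finally show ?thesis .
qed

lemma gauss_expect_abs_inner_ge:
  fixes u c :: "'a::euclidean_space"
  shows "norm u / sqrt (2 * pi) \<le> gauss_expect (\<lambda>x. \<bar>u \<bullet> (c + x)\<bar>) / 2"
proof (cases "u = 0")
  case False
  then show ?thesis
    using integral_normal_density_abs_shift_ge[of "norm u" "u \<bullet> c"]
    by (simp add: gauss_expect_abs_inner_eq sqrt_2_div_pi)
qed (simp add: gauss_expect_def)

lemma gauss_expect_abs_inner_le:
  fixes u c :: "'a::euclidean_space"
  shows "gauss_expect (\<lambda>x. \<bar>u \<bullet> (c + x)\<bar>) / 2 \<le> norm u / sqrt (2 * pi) + \<bar>u \<bullet> c\<bar> / 2"
proof (cases "u = 0")
  case False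
  then show ?thesis
    using integral_normal_density_abs_shift_le[of "norm u" "u \<bullet> c"]
    by (simp add: gauss_expect_abs_inner_eq sqrt_2_div_pi)
qed (simp add: gauss_expect_def)

lemma mem_G_zonoid_iff:
  "x \<in> G_zonoid c \<longleftrightarrow> (\<forall>u. u \<bullet> x \<le> gauss_expect (\<lambda>y. \<bar>u \<bullet> (c + y)\<bar>) / 2)"
  by (simp add: G_zonoid_def body_of_support_def)

lemma cball_subset_G_zonoid: "cball 0 (1 / sqrt (2 * pi)) \<subseteq> G_zonoid c"
proof
  fix x :: 'a assume x: "x \<in> cball 0 (1 / sqrt (2 * pi))"
  have "u \<bullet> x \<le> gauss_expect (\<lambda>y. \<bar>u \<bullet> (c + y)\<bar>) / 2" for u
  proof -
    have "u \<bullet> x \<le> norm u * norm x"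
      by (rule norm_cauchy_schwarz)
    also have "\<dots> \<le> norm u / sqrt (2 * pi)"
      using x mult_left_mono[of "norm x" "1 / sqrt (2 * pi)" "norm u"] by simp
    also have "\<dots> \<le> gauss_expect (\<lambda>y. \<bar>u \<bullet> (c + y)\<bar>) / 2"
      by (rule gauss_expect_abs_inner_ge)
    finally show ?thesis .
  qed
  then show "x \<in> G_zonoid c"
    by (simp add: mem_G_zonoid_iff)
qed

lemma G_zonoid_subset_cball: "G_zonoid c \<subseteq> cball 0 (1 / sqrt (2 * pi) + norm c / 2)"
proof
  fix x :: 'a assume "x \<in> G_zonoid c"
  then have "x \<bullet> x \<le> gauss_expect (\<lambda>y. \<bar>x \<bullet> (c + y)\<bar>) / 2"
    by (simp add: mem_G_zonoid_iff)
  also have "\<dots> \<le> norm x / sqrt (2 * pi) + \<bar>x \<bullet> c\<bar> / 2"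
    by (rule gauss_expect_abs_inner_le)
  also have "\<dots> \<le> norm x * (1 / sqrt (2 * pi) + norm c / 2)"
    using Cauchy_Schwarz_ineq2[of x c] by (simp add: algebra_simps)
  finally have "norm x * norm x \<le> norm x * (1 / sqrt (2 * pi) + norm c / 2)"
    by (simp add: dot_square_norm power2_eq_square)
  then show "x \<in> cball 0 (1 / sqrt (2 * pi) + norm c / 2)"
    by (cases "x = 0") auto
qed

lemma inner_le_of_mem_G_zonoid:
  assumes "x \<in> G_zonoid c" and "u \<bullet> c = 0"
  shows "u \<bullet> x \<le> norm u / sqrt (2 * pi)"
proof -
  have "u \<bullet> x \<le> gauss_expect (\<lambda>y. \<bar>u \<bullet> (c + y)\<bar>) / 2"
    using assms(1) by (simp add: mem_G_zonoid_iff)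
  also have "\<dots> \<le> norm u / sqrt (2 * pi) + \<bar>u \<bullet> c\<bar> / 2"
    by (rule gauss_expect_abs_inner_le)
  finally show ?thesis
    using assms(2) by simp
qed

lemma proj_perp_scaleR: "proj_perp v (r *\<^sub>R x) = r *\<^sub>R proj_perp v x"
  by (simp add: proj_perp_def algebra_simps)

lemma proj_perp_orthogonal: "proj_perp v x \<bullet> v = 0"
  by (cases "v = 0") (simp_all add: proj_perp_def inner_diff_left)

lemma proj_perp_eq_self: "x \<bullet> v = 0 \<Longrightarrow> proj_perp v x = x"
  by (simp add: proj_perp_def)

lemma inner_proj_perp_self: "proj_perp v x \<bullet> x = (norm (proj_perp v x))\<^sup>2"
proof -
  have "x = proj_perp v x + ((x \<bullet> v) / (v \<bullet> v)) *\<^sub>R v"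
    by (simp add: proj_perp_def)
  then have "proj_perp v x \<bullet> x = proj_perp v x \<bullet> (proj_perp v x + ((x \<bullet> v) / (v \<bullet> v)) *\<^sub>R v)"
    by (rule arg_cong)
  then show ?thesis
    by (simp add: inner_add_right proj_perp_orthogonal power2_norm_eq_inner)
qed

lemma proj_perp_image_G_zonoid:
  "proj_perp v ` G_zonoid (t *\<^sub>R v) = cball 0 (1 / sqrt (2 * pi)) \<inter> {x. x \<bullet> v = 0}"
proof (intro equalityI subsetI)
  fix w assume "w \<in> proj_perp v ` G_zonoid (t *\<^sub>R v)"
  then obtain x where x: "x \<in> G_zonoid (t *\<^sub>R v)" and w: "w = proj_perp v x"
    by blast
  have "w \<bullet> v = 0"
    unfolding w by (rule proj_perp_orthogonal)
  then have bound: "norm w * norm w \<le> norm w * (1 / sqrt (2 * pi))"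
    using inner_le_of_mem_G_zonoid[OF x, of w] inner_proj_perp_self[of v x]
    by (simp add: w power2_eq_square)
  have "norm w \<le> 1 / sqrt (2 * pi)"
    using mult_left_le_imp_le[OF bound] by (cases "w = 0") simp_all
  then show "w \<in> cball 0 (1 / sqrt (2 * pi)) \<inter> {x. x \<bullet> v = 0}"
    using \<open>w \<bullet> v = 0\<close> by simp
next
  fix w assume w: "w \<in> cball 0 (1 / sqrt (2 * pi)) \<inter> {x. x \<bullet> v = 0}"
  then have "proj_perp v w = w"
    by (simp add: proj_perp_eq_self)
  with w cball_subset_G_zonoid show "w \<in> proj_perp v ` G_zonoid (t *\<^sub>R v)"
    by (metis IntD1 image_eqI subsetD)
qed

section \<open>Hausdorff distance to centred balls\<close>

lemma hausdorff_dist_le: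
  assumes "S \<noteq> {}" "T \<noteq> {}"
    and "\<And>x. x \<in> S \<Longrightarrow> infdist x T \<le> e" "\<And>y. y \<in> T \<Longrightarrow> infdist y S \<le> e"
  shows "hausdorff_dist S T \<le> e"
  unfolding hausdorff_dist_def using assms by (simp add: cSUP_least)

lemma hausdorff_dist_nonneg:
  assumes "S \<noteq> {}" and "bdd_above ((\<lambda>x. infdist x T) ` S)"
  shows "0 \<le> hausdorff_dist S T"
proof -
  obtain x where "x \<in> S"
    using assms(1) by blast
  then have "0 \<le> (SUP x\<in>S. infdist x T)"
    using cSUP_upper[OF _ assms(2)] infdist_nonneg order_trans by blast
  then show ?thesis
    unfolding hausdorff_dist_def by simp
qed

lemma infdist_le_of_cball_subset:
  fixes x :: "'a::real_normed_vector"
  assumes "0 \<le> r" and "cball 0 r \<subseteq> S"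
  shows "infdist x S \<le> max 0 (norm x - r)"
proof (cases "norm x \<le> r")
  case True
  then show ?thesis
    using assms(2) by (simp add: subset_iff)
next
  case False
  then have "x \<noteq> 0"
    using assms(1) by auto
  define y where "y = (r / norm x) *\<^sub>R x"
  have "y \<in> S"
    using assms \<open>x \<noteq> 0\<close> by (auto simp: y_def)
  have "dist x y = norm ((1 - r / norm x) *\<^sub>R x)"
    by (simp add: dist_norm y_def algebra_simps)
  also have "\<dots> = norm x - r"
    using False \<open>x \<noteq> 0\<close> by (simp add: field_simps)
  finally show ?thesis
    using infdist_le[OF \<open>y \<in> S\<close>, of x] by simp
qed

lemma hausdorff_dist_cball_le:
  fixes S :: "'a::real_normed_vector set"
  assumes "0 \<le> r" "r \<le> \<rho>" and inner: "cball 0 r \<subseteq> S" and outer: "S \<subseteq> cball 0 R"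
  shows "\<bar>hausdorff_dist S (cball 0 \<rho>)\<bar> \<le> max (R - \<rho>) (\<rho> - r)"
proof -
  have "S \<noteq> {}"
    using assms(1) inner by auto
  have S_close: "infdist x (cball 0 \<rho>) \<le> max (R - \<rho>) (\<rho> - r)" if "x \<in> S" for x
    using infdist_le_of_cball_subset[of \<rho> "cball 0 \<rho>" x] outer that assms(1,2) by force
  have "infdist y S \<le> max (R - \<rho>) (\<rho> - r)" if "y \<in> cball 0 \<rho>" for y
    using infdist_le_of_cball_subset[OF assms(1) inner, of y] that assms(2) by auto
  with S_close have "hausdorff_dist S (cball 0 \<rho>) \<le> max (R - \<rho>) (\<rho> - r)"
    using \<open>S \<noteq> {}\<close> assms(1,2) by (intro hausdorff_dist_le) auto
  moreover have "0 \<le> hausdorff_dist S (cball 0 \<rho>)"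
    using \<open>S \<noteq> {}\<close> S_close by (intro hausdorff_dist_nonneg bdd_aboveI2)
  ultimately show ?thesis
    by linarith
qed

lemma scaleR_image_cball_inter_orthogonal:
  fixes v :: "'a::real_inner"
  assumes "0 < k"
  shows "(\<lambda>x. k *\<^sub>R x) ` (cball 0 r \<inter> {x. x \<bullet> v = 0}) = cball 0 (k * r) \<inter> {x. x \<bullet> v = 0}"
proof (intro equalityI subsetI)
  fix y assume "y \<in> cball 0 (k * r) \<inter> {x. x \<bullet> v = 0}"
  then have "y = k *\<^sub>R ((1 / k) *\<^sub>R y)" and "(1 / k) *\<^sub>R y \<in> cball 0 r \<inter> {x. x \<bullet> v = 0}"
    using assms by (auto simp: field_simps)
  then show "y \<in> (\<lambda>x. k *\<^sub>R x) ` (cball 0 r \<inter> {x. x \<bullet> v = 0})"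
    by blast
qed (use assms in \<open>auto simp: mult_left_mono\<close>)

lemma zeta_cball_bounds:
  fixes v :: "'a::euclidean_space"
  assumes "0 < \<tau>"
  shows "cball 0 (exp (- a\<^sup>2 / (2 * \<tau>\<^sup>2)) / (2 * pi)) \<subseteq> zeta a v \<tau>"
    and "zeta a v \<tau>
       \<subseteq> cball 0 (exp (- a\<^sup>2 / (2 * \<tau>\<^sup>2)) / sqrt (2 * pi) * (1 / sqrt (2 * pi) + norm v / (2 * \<tau>)))"
proof -
  define s where "s = exp (- a\<^sup>2 / (2 * \<tau>\<^sup>2)) / sqrt (2 * pi)"
  have "0 < s"
    by (simp add: s_def)
  have zeta: "zeta a v \<tau> = (\<lambda>x. s *\<^sub>R x) ` G_zonoid ((1 / \<tau>) *\<^sub>R v)"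
    by (simp add: zeta_def s_def)
  have "(\<lambda>x. s *\<^sub>R x) ` cball (0::'a) (1 / sqrt (2 * pi)) = cball 0 (s / sqrt (2 * pi))"
    using \<open>0 < s\<close> by (simp add: cball_scale)
  also have "s / sqrt (2 * pi) = exp (- a\<^sup>2 / (2 * \<tau>\<^sup>2)) / (2 * pi)"
    by (simp add: s_def)
  finally show "cball 0 (exp (- a\<^sup>2 / (2 * \<tau>\<^sup>2)) / (2 * pi)) \<subseteq> zeta a v \<tau>"
    unfolding zeta by (metis image_mono cball_subset_G_zonoid)
  have "(\<lambda>x. s *\<^sub>R x) ` cball (0::'a) (1 / sqrt (2 * pi) + norm ((1 / \<tau>) *\<^sub>R v) / 2)
      = cball 0 (s * (1 / sqrt (2 * pi) + norm v / (2 * \<tau>)))"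
    using \<open>0 < s\<close> assms by (simp add: cball_scale mult.commute)
  then show "zeta a v \<tau>
      \<subseteq> cball 0 (exp (- a\<^sup>2 / (2 * \<tau>\<^sup>2)) / sqrt (2 * pi) * (1 / sqrt (2 * pi) + norm v / (2 * \<tau>)))"
    unfolding zeta s_def[symmetric] by (metis image_mono G_zonoid_subset_cball)
qed

lemma zeta_tendsto_cball_at_top:
  fixes v :: "'a::euclidean_space"
  shows "((\<lambda>\<tau>. hausdorff_dist (zeta a v \<tau>) (cball 0 (1 / (2 * pi)))) \<longlongrightarrow> 0) at_top"
proof -
  define e where "e \<tau> = exp (- a\<^sup>2 / (2 * \<tau>\<^sup>2))" for \<tau> :: real
  define R where "R \<tau> = e \<tau> / sqrt (2 * pi) * (1 / sqrt (2 * pi) + norm v / (2 * \<tau>))" for \<tau>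
  have "(e \<longlongrightarrow> 1) at_top"
    unfolding e_def by real_asymp
  moreover have "((\<lambda>\<tau>. norm v / (2 * \<tau>)) \<longlongrightarrow> 0) at_top"
    by real_asymp
  ultimately have "((\<lambda>\<tau>. max (R \<tau> - 1 / (2 * pi)) (1 / (2 * pi) - e \<tau> / (2 * pi)))
      \<longlongrightarrow> max (1 / sqrt (2 * pi) * (1 / sqrt (2 * pi) + 0) - 1 / (2 * pi)) (1 / (2 * pi) - 1 / (2 * pi))) at_top"
    unfolding R_def by (intro tendsto_intros) simp_all
  then have "((\<lambda>\<tau>. max (R \<tau> - 1 / (2 * pi)) (1 / (2 * pi) - e \<tau> / (2 * pi))) \<longlongrightarrow> 0) at_top"
    by (simp add: real_sqrt_mult[symmetric])
  moreover have "\<forall>\<^sub>F \<tau> in at_top. norm (hausdorff_dist (zeta a v \<tau>) (cball 0 (1 / (2 * pi))))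
      \<le> max (R \<tau> - 1 / (2 * pi)) (1 / (2 * pi) - e \<tau> / (2 * pi))"
    using eventually_gt_at_top[of 0]
  proof eventually_elim
    case (elim \<tau>)
    have "e \<tau> \<le> 1"
      by (simp add: e_def)
    then show ?case
      using zeta_cball_bounds[OF elim, of a v] unfolding real_norm_def e_def[symmetric] R_def[symmetric]
      by (intro hausdorff_dist_cball_le) (auto simp: divide_right_mono e_def)
  qed
  ultimately show ?thesis
    by (rule Lim_null_comparison[rotated])
qed

lemma zeta_tendsto_zero_at_right:
  fixes v :: "'a::euclidean_space"
  assumes "a \<noteq> 0"
  shows "((\<lambda>\<tau>. hausdorff_dist (zeta a v \<tau>) {0}) \<longlongrightarrow> 0) (at_right 0)"
proof -
  define R where "R \<tau> = exp (- a\<^sup>2 / (2 * \<tau>\<^sup>2)) / sqrt (2 * pi) * (1 / sqrt (2 * pi) + norm v / (2 * \<tau>))"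
    for \<tau> :: real
  have "(R \<longlongrightarrow> 0) (at_right 0)"
    unfolding R_def using assms by real_asymp
  then have "((\<lambda>\<tau>. max (R \<tau> - 0) (0 - 0)) \<longlongrightarrow> max (0 - 0) (0 - 0)) (at_right 0)"
    by (intro tendsto_intros)
  moreover have "\<forall>\<^sub>F \<tau> in at_right 0. norm (hausdorff_dist (zeta a v \<tau>) (cball 0 0)) \<le> max (R \<tau> - 0) (0 - 0)"
    using eventually_at_right_less[of 0]
  proof eventually_elim
    case (elim \<tau>)
    then have "cball 0 0 \<subseteq> zeta a v \<tau>"
      using zeta_cball_bounds(1)[of \<tau> a v] by auto
    then show ?case
      using zeta_cball_bounds(2)[of \<tau> a v] elim unfolding real_norm_def R_def[symmetric]
      by (intro hausdorff_dist_cball_le) auto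
  qed
  ultimately show ?thesis
    by (simp add: Lim_null_comparison)
qed

lemma proj_perp_image_zeta_zero:
  fixes v :: "'a::euclidean_space"
  shows "proj_perp v ` zeta 0 v \<tau> = (\<lambda>x. (1 / (2 * pi)) *\<^sub>R x) ` (cball 0 1 \<inter> {x. x \<bullet> v = 0})"
proof -
  have "proj_perp v ` zeta 0 v \<tau>
      = (\<lambda>x. (1 / sqrt (2 * pi)) *\<^sub>R x) ` proj_perp v ` G_zonoid ((1 / \<tau>) *\<^sub>R v)"
    by (simp add: zeta_def image_image proj_perp_scaleR)
  also have "\<dots> = cball 0 (1 / (2 * pi)) \<inter> {x. x \<bullet> v = 0}"
    by (simp add: proj_perp_image_G_zonoid scaleR_image_cball_inter_orthogonal real_sqrt_mult[symmetric])
  also have "\<dots> = (\<lambda>x. (1 / (2 * pi)) *\<^sub>R x) ` (cball 0 1 \<inter> {x. x \<bullet> v = 0})"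
    by (simp add: scaleR_image_cball_inter_orthogonal)
  finally show ?thesis .
qed

theorem proposition4p10:
  fixes a :: real and v :: "'a::euclidean_space"
  shows "((\<lambda>\<tau>. hausdorff_dist (zeta a v \<tau>) ((\<lambda>x. (1 / (2 * pi)) *\<^sub>R x) ` cball 0 1))
            \<longlongrightarrow> 0) at_top
       \<and> (a \<noteq> 0 \<longrightarrow> ((\<lambda>\<tau>. hausdorff_dist (zeta a v \<tau>) {0}) \<longlongrightarrow> 0) (at_right 0))
       \<and> (a = 0 \<longrightarrow> (\<forall>\<tau>>0.
           proj_perp v ` zeta a v \<tau> =
           (\<lambda>x. (1 / (2 * pi)) *\<^sub>R x) ` (cball 0 1 \<inter> {x. x \<bullet> v = 0})))"
proof -
  have "(\<lambda>x. (1 / (2 * pi)) *\<^sub>R x) ` cball (0::'a) 1 = cball 0 (1 / (2 * pi))"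
    by (simp add: cball_scale)
  then show ?thesis
    using zeta_tendsto_cball_at_top[of a v] zeta_tendsto_zero_at_right[of a v]
      proj_perp_image_zeta_zero[of v]
    by simp
qed

end
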